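(* Let $d\ge1$ and $\alpha>0$. Suppose that for every $n\ge1$ and every finite hypergraph $\mathcal{T}$ of discrete $d$-intervals on $[n]$ one has $\tau^*_\ell(\mathcal{T})\le\alpha d\,\nu_\ell(\mathcal{T})$, where $\ell(T)=|T|$. Then for every hypergraph $H$ of $d$-intervals (on $\mathbb{R}$) and every weight system $w$ on $H$, $\tau_w(H)\le\alpha d^2\,\nu_w(H)$.
   Context: A $d$-interval is a union of at most $d$ pairwise disjoint closed intervals of $\mathbb{R}$; a hypergraph of $d$-intervals is a finite family of $d$-intervals, regarded as a hypergraph on vertex set $\mathbb{R}$. A discrete $d$-interval on $[n]=\{1,\dots,n\}$ is a union of at most $d$ pairwise disjoint nonempty sets of consecutive integers; a hypergraph of discrete $d$-intervals on $[n]$ is a finite family of these, regarded as a hypergraph on vertex set $[n]$. A matching is a set of pairwise disjoint edges. For a weight function $w$ on the edges (with values in $\mathbb{N}$; for $\ell$, $\ell(T)=|T|$), $\nu_w$ is the maximum of $\sum_{h\in M}w(h)$ over matchings $M$; a $w$-cover is a finitely supported $g$ from the vertex set to $\mathbb{N}$ with $\sum_{v\in h}g(v)\ge w(h)$ for every edge $h$, and $\tau_w$ is the minimum of $\sum_v g(v)$ over $w$-covers; $\tau^*_w$ is defined the same way with $g$ taking values in $\mathbb{R}_{\ge0}$ (infimum). A weight system on $H$ is a function $w:H\to\mathbb{N}$. *)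

theory Defs
  imports Main "HOL-Library.Extended_Nat" Complex_Main
begin

definition d_interval :: "nat \<Rightarrow> ('a::linorder) set \<Rightarrow> bool" where
  "d_interval d S \<longleftrightarrow> (\<exists>I :: ('a \<times> 'a) list.
     1 \<le> length I \<and> length I \<le> d \<and>
     (\<forall>p\<in>set I. fst p \<le> snd p) \<and>
     (\<forall>i<length I. \<forall>j<length I. i \<noteq> j \<longrightarrow>
        {fst (I!i)..snd (I!i)} \<inter> {fst (I!j)..snd (I!j)} = {}) \<and>
     S = (\<Union>p\<in>set I. {fst p..snd p}))"

definition discrete_d_interval :: "nat \<Rightarrow> nat \<Rightarrow> nat set \<Rightarrow> bool" where
  "discrete_d_interval n d S \<longleftrightarrow> d_interval d S \<and> S \<subseteq> {1..n}"

definition matching :: "'v set set \<Rightarrow> bool" where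
  "matching M \<longleftrightarrow> (\<forall>a\<in>M. \<forall>b\<in>M. a \<noteq> b \<longrightarrow> a \<inter> b = {})"

definition nu_w :: "('v set \<Rightarrow> nat) \<Rightarrow> 'v set set \<Rightarrow> nat" where
  "nu_w w H = Max {(\<Sum>h\<in>M. w h) | M. M \<subseteq> H \<and> matching M}"

definition is_w_cover :: "('v set \<Rightarrow> nat) \<Rightarrow> 'v set set \<Rightarrow> ('v \<Rightarrow> nat) \<Rightarrow> bool" where
  "is_w_cover w H g \<longleftrightarrow> finite {v. g v \<noteq> 0} \<and>
     (\<forall>h\<in>H. w h \<le> (\<Sum>v\<in>h \<inter> {v. g v \<noteq> 0}. g v))"

definition tau_w :: "('v set \<Rightarrow> nat) \<Rightarrow> 'v set set \<Rightarrow> nat" where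
  "tau_w w H = (LEAST t. \<exists>g. is_w_cover w H g \<and> t = (\<Sum>v\<in>{v. g v \<noteq> 0}. g v))"

definition frac_tau_w :: "nat \<Rightarrow> (nat set \<Rightarrow> nat) \<Rightarrow> nat set set \<Rightarrow> real" where
  "frac_tau_w n w T = Inf {(\<Sum>v\<in>{1..n}. g v) | g :: nat \<Rightarrow> real.
      (\<forall>v. 0 \<le> g v) \<and> (\<forall>t\<in>T. real (w t) \<le> (\<Sum>v\<in>t \<inter> {1..n}. g v))}"

end

theory Submission
  imports Defs "HOL-Analysis.Analysis" "HOL-Library.Multiset"
begin

text \<open>
  Fix a finite hypergraph H of d-intervals with weights w and let E be the
  finite set of endpoints of the component intervals of its edges.  Fractional w-covers
  can be taken to live on E, and an optimal one g exists by compactness.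

  (1) Rounding: some component of each edge carries at least a 1/d share of the weight
      of g on that edge, and fractional covers of intervals on a line round to integral
      ones (tokens placed where the cumulative weight crosses an integer).
      Hence tau_w(H) \<le> d * sum g.
  (2) Blow-up: for N \<ge> 1 replace each e \<in> E by about N * g(e) consecutive integers.  The
      edges that are tight for g become discrete d-intervals T_N on [n].  A fractional
      cover of T_N pulls back to a vector satisfying the tight constraints, so by
      optimality of g (near an optimum only the tight constraints matter)
      N * sum g \<le> tau*(T_N); matchings of T_N lift to matchings of H, so
      nu(T_N) \<le> N * nu_w(H) + 2|E||H|.
  (3) The hypothesis gives N * sum g \<le> alpha * d * (N * nu_w(H) + 2|E||H|) for all N,
      hence sum g \<le> alpha * d * nu_w(H), and with (1) tau_w(H) \<le> alpha * d^2 * nu_w(H).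
\<close>

definition interval_decomp :: "('a::linorder \<times> 'a) list \<Rightarrow> 'a set \<Rightarrow> bool" where
  "interval_decomp I S \<longleftrightarrow> I \<noteq> [] \<and> (\<forall>p\<in>set I. fst p \<le> snd p) \<and>
     (\<forall>i<length I. \<forall>j<length I. i \<noteq> j \<longrightarrow>
        {fst (I!i)..snd (I!i)} \<inter> {fst (I!j)..snd (I!j)} = {}) \<and>
     S = (\<Union>p\<in>set I. {fst p..snd p})"

lemma d_interval_iff_decomp: "d_interval d S \<longleftrightarrow> (\<exists>I. interval_decomp I S \<and> length I \<le> d)"
  unfolding d_interval_def interval_decomp_def by (simp add: Suc_le_eq conj_ac)

lemma interval_decomp_mem:
  "interval_decomp I S \<Longrightarrow> x \<in> S \<longleftrightarrow> (\<exists>p\<in>set I. fst p \<le> x \<and> x \<le> snd p)"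
  unfolding interval_decomp_def by auto

lemma UN_set_conv_nth: "(\<Union>p\<in>set I. f p) = (\<Union>i<length I. f (I!i))"
  by (metis image_image lessThan_atLeast0 set_map map_nth set_upt)

lemma pigeonhole_component:
  fixes g :: "'a::linorder \<Rightarrow> real"
  assumes E: "finite E" and I: "interval_decomp I S" "length I \<le> d"
    and r: "0 \<le> r" "r \<le> (\<Sum>e\<in>S \<inter> E. g e)"
  shows "\<exists>p\<in>set I. r \<le> real d * (\<Sum>e\<in>E \<inter> {fst p..snd p}. g e)"
proof (rule ccontr)
  assume small: "\<not> ?thesis"
  let ?A = "\<lambda>i. E \<inter> {fst (I!i)..snd (I!i)}"
  have union: "S \<inter> E = (\<Union>i<length I. ?A i)"
    using I(1) by (auto simp: interval_decomp_def UN_set_conv_nth)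
  have disjoint: "\<forall>i\<in>{..<length I}. \<forall>j\<in>{..<length I}. i \<noteq> j \<longrightarrow> ?A i \<inter> ?A j = {}"
    using I(1) unfolding interval_decomp_def by blast
  have "(\<Sum>e\<in>S \<inter> E. g e) = (\<Sum>i<length I. \<Sum>e\<in>?A i. g e)"
    unfolding union by (rule sum.UNION_disjoint) (use E disjoint in auto)
  then have "real d * (\<Sum>e\<in>S \<inter> E. g e) = (\<Sum>i<length I. real d * (\<Sum>e\<in>?A i. g e))"
    by (simp add: sum_distrib_left)
  also have "\<dots> < (\<Sum>i<length I. r)"
    using small I(1) by (intro sum_strict_mono) (auto simp: not_le interval_decomp_def)
  also have "\<dots> \<le> real d * r"
    using I(2) r(1) by (simp add: mult_right_mono)
  finally have "real d * (\<Sum>e\<in>S \<inter> E. g e) < real d * r" .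
  moreover have "0 < d"
    using I length_greater_0_conv[of I] unfolding interval_decomp_def by linarith
  ultimately show False
    using r(2) by simp
qed

lemma sum_over_fibers:
  assumes "finite A" "finite S"
  shows "(\<Sum>k\<in>{k\<in>A. \<phi> k \<in> S}. f k) = (\<Sum>e\<in>S. \<Sum>k\<in>{k\<in>A. \<phi> k = e}. f k)"
proof -
  have "(\<Sum>e\<in>S. \<Sum>k\<in>{k\<in>{k\<in>A. \<phi> k \<in> S}. \<phi> k = e}. f k) = (\<Sum>k\<in>{k\<in>A. \<phi> k \<in> S}. f k)"
    by (rule sum.group) (use assms in auto)
  moreover have "{k\<in>{k\<in>A. \<phi> k \<in> S}. \<phi> k = e} = {k\<in>A. \<phi> k = e}" if "e \<in> S" for e
    using that by auto
  ultimately show ?thesis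
    by simp
qed

(* Rounding on a line: token j sits at the first point of E where the cumulative weight
   reaches j. *)
definition mass_below :: "'a::linorder set \<Rightarrow> ('a \<Rightarrow> real) \<Rightarrow> 'a \<Rightarrow> real" where
  "mass_below E G x = (\<Sum>e\<in>{e\<in>E. e \<le> x}. G e)"

definition token :: "'a::linorder set \<Rightarrow> ('a \<Rightarrow> real) \<Rightarrow> nat \<Rightarrow> 'a" where
  "token E G j = Min {x\<in>E. real j \<le> mass_below E G x}"

lemma token_placement:
  fixes E :: "'a::linorder set" and G :: "'a \<Rightarrow> real"
  assumes E: "finite E" and G: "\<And>x. 0 \<le> G x" and b: "b \<in> E"
    and below: "(\<Sum>e\<in>{e\<in>E. e < a}. G e) < real j"
    and above: "real j \<le> mass_below E G b"
  shows "token E G j \<in> E \<inter> {a..b}"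
proof -
  let ?X = "{x\<in>E. real j \<le> mass_below E G x}"
  have "b \<in> ?X"
    using b above by simp
  moreover have "finite ?X"
    using E by simp
  ultimately have t: "token E G j \<in> ?X" "token E G j \<le> b"
    unfolding token_def using Min_in Min_le by blast+
  have "a \<le> token E G j"
  proof (rule ccontr)
    assume "\<not> a \<le> token E G j"
    then have sub: "{e\<in>E. e \<le> token E G j} \<subseteq> {e\<in>E. e < a}"
      by auto
    have "mass_below E G (token E G j) \<le> (\<Sum>e\<in>{e\<in>E. e < a}. G e)"
      unfolding mass_below_def by (rule sum_mono2[OF _ sub]) (use E G in auto)
    then show False
      using t(1) below by simp
  qed
  then show ?thesis
    using t by auto
qed

lemma token_in_E:
  fixes E :: "'a::linorder set" and G :: "'a \<Rightarrow> real"
  assumes E: "finite E" and G: "\<And>x. 0 \<le> G x" and j: "j \<in> {1..nat \<lfloor>\<Sum>x\<in>E. G x\<rfloor>}"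
  shows "token E G j \<in> E"
proof -
  have "E \<noteq> {}"
    using j by auto
  then have max: "Max E \<in> E" and high: "{e\<in>E. e \<le> Max E} = E"
    and low: "{e\<in>E. e < Min E} = {}"
    using E by auto
  have "(\<Sum>e\<in>{e\<in>E. e < Min E}. G e) < real j"
    using j unfolding low by simp
  moreover have "real j \<le> mass_below E G (Max E)"
  proof -
    have "real j \<le> real (nat \<lfloor>\<Sum>x\<in>E. G x\<rfloor>)"
      using j by simp
    also have "\<dots> \<le> (\<Sum>x\<in>E. G x)"
      using G by (simp add: sum_nonneg)
    finally show ?thesis
      unfolding mass_below_def high .
  qed
  ultimately show ?thesis
    using token_placement[where G=G, OF E G max] by blast
qed

lemma tokens_in_interval:
  fixes E :: "'a::linorder set" and G :: "'a \<Rightarrow> real"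
  assumes E: "finite E" and G: "\<And>x. 0 \<le> G x" and b: "b \<in> E"
    and k: "real k \<le> (\<Sum>x\<in>E \<inter> {a..b}. G x)"
  shows "k \<le> card {j\<in>{1..nat \<lfloor>\<Sum>x\<in>E. G x\<rfloor>}. token E G j \<in> E \<inter> {a..b}}"
proof (cases "a \<le> b")
  case False
  then show ?thesis
    using k by simp
next
  case True
  define below where "below = (\<Sum>e\<in>{e\<in>E. e < a}. G e)"
  have split: "{e\<in>E. e \<le> b} = {e\<in>E. e < a} \<union> (E \<inter> {a..b})"
    using True by auto
  have mass_b: "mass_below E G b = below + (\<Sum>x\<in>E \<inter> {a..b}. G x)"
    unfolding mass_below_def below_def split by (rule sum.union_disjoint) (use E in auto)
  have "mass_below E G b \<le> (\<Sum>x\<in>E. G x)"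
    unfolding mass_below_def by (rule sum_mono2) (use E G in auto)
  define m where "m = nat \<lfloor>below\<rfloor>"
  have m: "real m \<le> below" "below < real m + 1"
    using G by (auto simp: m_def below_def sum_nonneg)
  have tokens: "{m+1..m+k} \<subseteq> {j\<in>{1..nat \<lfloor>\<Sum>x\<in>E. G x\<rfloor>}. token E G j \<in> E \<inter> {a..b}}"
  proof
    fix j assume j: "j \<in> {m+1..m+k}"
    then have "below < real j" "real j \<le> mass_below E G b"
      using m k mass_b by auto
    then show "j \<in> {j\<in>{1..nat \<lfloor>\<Sum>x\<in>E. G x\<rfloor>}. token E G j \<in> E \<inter> {a..b}}"
      using j token_placement[where G=G, OF E G b] \<open>mass_below E G b \<le> _\<close>
      by (auto simp: le_nat_floor below_def)
  qed
  then show ?thesis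
    using card_mono[OF _ tokens] by simp
qed

lemma line_rounding:
  fixes E :: "'a::linorder set" and G :: "'a \<Rightarrow> real"
  assumes E: "finite E" and G: "\<And>x. 0 \<le> G x"
  obtains c :: "'a \<Rightarrow> nat"
  where "{x. c x \<noteq> 0} \<subseteq> E" and "real (\<Sum>x\<in>E. c x) \<le> (\<Sum>x\<in>E. G x)"
    and "\<And>a b k. b \<in> E \<Longrightarrow> real k \<le> (\<Sum>x\<in>E \<inter> {a..b}. G x) \<Longrightarrow> k \<le> (\<Sum>x\<in>E \<inter> {a..b}. c x)"
proof
  define J where "J = nat \<lfloor>\<Sum>x\<in>E. G x\<rfloor>"
  define c where "c x = card {j\<in>{1..J}. token E G j = x}" for x
  have count: "(\<Sum>x\<in>S. c x) = card {j\<in>{1..J}. token E G j \<in> S}" if "finite S" for S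
    using sum_over_fibers[where A="{1..J}" and S=S and \<phi>="token E G" and f="\<lambda>_. 1::nat"] that
    by (simp add: c_def)
  have tokens_E: "{j\<in>{1..J}. token E G j \<in> E} = {1..J}"
    using token_in_E[where G=G, OF E G] by (auto simp: J_def)
  show "{x. c x \<noteq> 0} \<subseteq> E"
  proof
    fix x assume "x \<in> {x. c x \<noteq> 0}"
    then obtain j where "j \<in> {1..J}" "token E G j = x"
      unfolding c_def by (metis (mono_tags, lifting) Collect_empty_eq card.empty mem_Collect_eq)
    then show "x \<in> E"
      using tokens_E by blast
  qed
  have "(\<Sum>x\<in>E. c x) = J"
    using count[OF E] tokens_E by simp
  then show "real (\<Sum>x\<in>E. c x) \<le> (\<Sum>x\<in>E. G x)"
    using G by (simp add: J_def sum_nonneg)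
  show "k \<le> (\<Sum>x\<in>E \<inter> {a..b}. c x)" if "b \<in> E" "real k \<le> (\<Sum>x\<in>E \<inter> {a..b}. G x)" for a b k
    using tokens_in_interval[where G=G, OF E G that] count[of "E \<inter> {a..b}"] E by (simp add: J_def)
qed

definition enum :: "'a::linorder multiset \<Rightarrow> nat \<Rightarrow> 'a" where
  "enum M k = sorted_list_of_multiset M ! (k - 1)"

lemma length_sorted_list_of_multiset: "length (sorted_list_of_multiset M) = size M"
  by (metis mset_sorted_list_of_multiset size_mset)

lemma enum_mono:
  "k \<in> {1..size M} \<Longrightarrow> k' \<in> {1..size M} \<Longrightarrow> k \<le> k' \<Longrightarrow> enum M k \<le> enum M k'"
  unfolding enum_def
  by (rule sorted_nth_mono) (auto simp: length_sorted_list_of_multiset)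

lemma enum_in:
  assumes "k \<in> {1..size M}"
  shows "enum M k \<in># M"
proof -
  have "k - 1 < length (sorted_list_of_multiset M)"
    using assms by (auto simp: length_sorted_list_of_multiset)
  then show ?thesis
    unfolding enum_def by (metis nth_mem mset_sorted_list_of_multiset set_mset_mset)
qed

lemma enum_fiber_card: "card {k\<in>{1..size M}. enum M k = e} = count M e"
proof -
  let ?xs = "sorted_list_of_multiset M"
  have "{k\<in>{1..size M}. enum M k = e} = Suc ` {i. i < length ?xs \<and> ?xs ! i = e}"
  proof (rule set_eqI, rule iffI)
    fix k assume "k \<in> {k\<in>{1..size M}. enum M k = e}"
    then have "k = Suc (k - 1)" "k - 1 < length ?xs" "?xs ! (k - 1) = e"
      by (auto simp: enum_def length_sorted_list_of_multiset)
    then show "k \<in> Suc ` {i. i < length ?xs \<and> ?xs ! i = e}"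
      by blast
  qed (auto simp: enum_def length_sorted_list_of_multiset)
  then have "card {k\<in>{1..size M}. enum M k = e} = card {i. i < length ?xs \<and> ?xs ! i = e}"
    by (simp add: card_image)
  also have "\<dots> = count_list ?xs e"
    by (simp add: count_list_eq_length_filter length_filter_conv_card eq_commute)
  also have "\<dots> = count M e"
    by (metis count_mset mset_sorted_list_of_multiset)
  finally show ?thesis .
qed

lemma monotone_preimage_interval:
  fixes \<phi> :: "nat \<Rightarrow> 'a::linorder"
  assumes mono: "\<And>k k'. k \<in> {1..n} \<Longrightarrow> k' \<in> {1..n} \<Longrightarrow> k \<le> k' \<Longrightarrow> \<phi> k \<le> \<phi> k'"
    and ne: "{k\<in>{1..n}. \<phi> k \<in> {a..b}} \<noteq> {}"
  shows "{k\<in>{1..n}. \<phi> k \<in> {a..b}} = {Min {k\<in>{1..n}. \<phi> k \<in> {a..b}}..Max {k\<in>{1..n}. \<phi> k \<in> {a..b}}}"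
proof -
  let ?P = "{k\<in>{1..n}. \<phi> k \<in> {a..b}}"
  have fin: "finite ?P"
    by simp
  have lo: "Min ?P \<in> ?P" and hi: "Max ?P \<in> ?P"
    using Min_in[OF fin ne] Max_in[OF fin ne] by auto
  show ?thesis
  proof (rule set_eqI, rule iffI)
    fix k assume "k \<in> ?P"
    then show "k \<in> {Min ?P..Max ?P}"
      using fin by auto
  next
    fix k assume k: "k \<in> {Min ?P..Max ?P}"
    then have k1: "k \<in> {1..n}"
      using lo hi by auto
    have "\<phi> (Min ?P) \<le> \<phi> k" "\<phi> k \<le> \<phi> (Max ?P)"
      using mono[OF _ k1] mono[OF k1] lo hi k by auto
    then show "k \<in> ?P"
      using k1 lo hi by auto
  qed
qed

lemma monotone_preimage_decomp:
  fixes \<phi> :: "nat \<Rightarrow> 'a::linorder"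
  assumes mono: "\<And>k k'. k \<in> {1..n} \<Longrightarrow> k' \<in> {1..n} \<Longrightarrow> k \<le> k' \<Longrightarrow> \<phi> k \<le> \<phi> k'"
    and I: "interval_decomp I S"
    and hit: "\<And>p. p \<in> set I \<Longrightarrow> fst p \<in> \<phi> ` {1..n}"
  shows "\<exists>I'. interval_decomp I' {k\<in>{1..n}. \<phi> k \<in> S} \<and> length I' = length I"
proof -
  define P where "P p = {k\<in>{1..n}. \<phi> k \<in> {fst p..snd p}}" for p
  have P_ne: "P p \<noteq> {}" if "p \<in> set I" for p
    using hit[OF that] I that by (force simp: P_def interval_decomp_def)
  have P_eq: "P p = {Min (P p)..Max (P p)}" if "p \<in> set I" for p
    unfolding P_def by (rule monotone_preimage_interval[OF mono]) (use P_ne[OF that] in \<open>auto simp: P_def\<close>)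
  define I' where "I' = map (\<lambda>p. (Min (P p), Max (P p))) I"
  have I'_nth: "{fst (I'!i)..snd (I'!i)} = P (I!i)" if "i < length I" for i
    using P_eq that by (simp add: I'_def)
  have "interval_decomp I' {k\<in>{1..n}. \<phi> k \<in> S}"
    unfolding interval_decomp_def
  proof (intro conjI)
    show "I' \<noteq> []"
      using I by (simp add: I'_def interval_decomp_def)
    have "finite (P p)" for p
      by (simp add: P_def)
    then show "\<forall>q\<in>set I'. fst q \<le> snd q"
      using P_ne by (auto simp: I'_def intro: Max_ge Min_in)
    show "\<forall>i<length I'. \<forall>j<length I'. i \<noteq> j \<longrightarrow>
        {fst (I'!i)..snd (I'!i)} \<inter> {fst (I'!j)..snd (I'!j)} = {}"
    proof (intro allI impI)
      fix i j assume ij: "i < length I'" "j < length I'" "i \<noteq> j"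
      then have "i < length I" "j < length I"
        by (simp_all add: I'_def)
      then have "{fst (I!i)..snd (I!i)} \<inter> {fst (I!j)..snd (I!j)} = {}"
        using I ij(3) unfolding interval_decomp_def by blast
      then have "P (I!i) \<inter> P (I!j) = {}"
        by (auto simp: P_def)
      then show "{fst (I'!i)..snd (I'!i)} \<inter> {fst (I'!j)..snd (I'!j)} = {}"
        using ij I'_nth by (simp add: I'_def)
    qed
    have "(\<Union>q\<in>set I'. {fst q..snd q}) = (\<Union>p\<in>set I. P p)"
      using P_eq by (auto simp: I'_def)
    also have "\<dots> = {k\<in>{1..n}. \<phi> k \<in> S}"
      using interval_decomp_mem[OF I] by (auto simp: P_def)
    finally show "{k\<in>{1..n}. \<phi> k \<in> S} = (\<Union>q\<in>set I'. {fst q..snd q})"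
      by simp
  qed
  then show ?thesis
    by (auto simp: I'_def)
qed

lemma tau_w_le_cover: "is_w_cover w H c \<Longrightarrow> tau_w w H \<le> (\<Sum>v\<in>{v. c v \<noteq> 0}. c v)"
  unfolding tau_w_def by (rule Least_le) blast

lemma matching_weights_finite:
  "finite H \<Longrightarrow> finite {(\<Sum>h\<in>M. w h) | M. M \<subseteq> H \<and> matching M}"
  by (rule finite_subset[where B="(\<lambda>M. \<Sum>h\<in>M. w h) ` Pow H"]) auto

lemma nu_w_ge_matching:
  assumes "finite H" "M \<subseteq> H" "matching M"
  shows "(\<Sum>h\<in>M. w h) \<le> nu_w w H"
  unfolding nu_w_def by (rule Max_ge[OF matching_weights_finite[OF assms(1)]]) (use assms in auto)

lemma nu_w_attained:
  assumes "finite H"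
  obtains M where "M \<subseteq> H" "matching M" "nu_w w H = (\<Sum>h\<in>M. w h)"
proof -
  have "0 \<in> {(\<Sum>h\<in>M. w h) | M. M \<subseteq> H \<and> matching M}"
    by (rule CollectI, rule exI[of _ "{}"]) (simp add: matching_def)
  then have "nu_w w H \<in> {(\<Sum>h\<in>M. w h) | M. M \<subseteq> H \<and> matching M}"
    unfolding nu_w_def by (intro Max_in matching_weights_finite[OF assms]) auto
  then show ?thesis
    using that by blast
qed

lemma frac_tau_card_ge:
  assumes "\<And>f. \<forall>v. 0 \<le> f v \<Longrightarrow> \<forall>t\<in>T. real (card t) \<le> (\<Sum>v\<in>t \<inter> {1..n}. f v) \<Longrightarrow>
      x \<le> (\<Sum>v\<in>{1..n}. f v)"
    and "\<forall>t\<in>T. t \<subseteq> {1..n}"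
  shows "x \<le> frac_tau_w n card T"
  unfolding frac_tau_w_def
proof (rule cInf_greatest)
  have "\<forall>t\<in>T. real (card t) \<le> (\<Sum>v\<in>t \<inter> {1..n}. 1)"
    using assms(2) by (simp add: Int_absorb2)
  then have "(\<Sum>v\<in>{1..n}. 1) \<in> {\<Sum>v\<in>{1..n}. g v |g. (\<forall>v. 0 \<le> g v) \<and> (\<forall>t\<in>T. real (card t) \<le> (\<Sum>v\<in>t \<inter> {1..n}. g v))}"
    by (intro CollectI exI[of _ "\<lambda>_. 1"]) simp
  then show "{\<Sum>v\<in>{1..n}. g v |g. (\<forall>v. 0 \<le> g v) \<and> (\<forall>t\<in>T. real (card t) \<le> (\<Sum>v\<in>t \<inter> {1..n}. g v))} \<noteq> {}"
    by blast
qed (use assms(1) in blast)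

definition frac_cover :: "'v set \<Rightarrow> ('v set \<Rightarrow> nat) \<Rightarrow> 'v set set \<Rightarrow> ('v \<Rightarrow> real) \<Rightarrow> bool" where
  "frac_cover E w H y \<longleftrightarrow> (\<forall>x. 0 \<le> y x) \<and> (\<forall>x. x \<notin> E \<longrightarrow> y x = 0) \<and>
     (\<forall>h\<in>H. real (w h) \<le> (\<Sum>e\<in>h \<inter> E. y e))"

definition optimal_frac_cover :: "'v set \<Rightarrow> ('v set \<Rightarrow> nat) \<Rightarrow> 'v set set \<Rightarrow> ('v \<Rightarrow> real) \<Rightarrow> bool" where
  "optimal_frac_cover E w H g \<longleftrightarrow> frac_cover E w H g \<and>
     (\<forall>y. frac_cover E w H y \<longrightarrow> (\<Sum>e\<in>E. g e) \<le> (\<Sum>e\<in>E. y e))"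

lemma frac_cover_exists:
  assumes E: "finite E" and H: "finite H" and meets: "\<And>h. h \<in> H \<Longrightarrow> h \<inter> E \<noteq> {}"
  shows "frac_cover E w H (\<lambda>x. if x \<in> E then real (\<Sum>h\<in>H. w h) else 0)"
  unfolding frac_cover_def
proof (intro conjI allI impI ballI)
  fix h assume h: "h \<in> H"
  then obtain e where e: "e \<in> h \<inter> E"
    using meets by blast
  have "real (w h) \<le> real (\<Sum>h\<in>H. w h)"
    using h H by (simp only: of_nat_le_iff member_le_sum)
  also have "\<dots> = (\<lambda>x. if x \<in> E then real (\<Sum>h\<in>H. w h) else 0) e"
    using e by simp
  also have "\<dots> \<le> (\<Sum>e\<in>h \<inter> E. if e \<in> E then real (\<Sum>h\<in>H. w h) else 0)"
    by (rule member_le_sum) (use e E in \<open>auto simp: sum_nonneg\<close>)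
  finally show "real (w h) \<le> (\<Sum>e\<in>h \<inter> E. if e \<in> E then real (\<Sum>h\<in>H. w h) else 0)" .
qed (auto simp: sum_nonneg)

lemma continuous_on_coordinate_sum:
  "continuous_on UNIV (\<lambda>y::'v \<Rightarrow> real. (\<Sum>e\<in>A. y e))"
  by (intro continuous_intros continuous_on_product_coordinates)

lemma bounded_frac_covers_compact:
  fixes E :: "'v set" and W :: real
  defines "K \<equiv> Pi UNIV (\<lambda>x. if x \<in> E then {0..W} else {0::real})"
  shows "compact (K \<inter> {y. frac_cover E w H y})"
proof -
  have "compactin (product_topology (\<lambda>_. euclidean) UNIV) (PiE UNIV (\<lambda>x. if x \<in> E then {0..W} else {0::real}))"
    by (subst compactin_PiE) auto
  then have "compact K"
    by (simp add: K_def euclidean_product_topology PiE_UNIV_domain)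
  moreover have "K \<inter> {y. frac_cover E w H y} = K \<inter> (\<Inter>h\<in>H. {y. real (w h) \<le> (\<Sum>e\<in>h \<inter> E. y e)})"
    by (auto simp: K_def frac_cover_def Pi_iff split: if_splits) (metis order_refl)
  moreover have "closed (\<Inter>h\<in>H. {y::'v \<Rightarrow> real. real (w h) \<le> (\<Sum>e\<in>h \<inter> E. y e)})"
    by (intro closed_INT ballI closed_Collect_le continuous_on_const continuous_on_coordinate_sum)
  ultimately show ?thesis
    using compact_Int_closed[of K] by simp
qed

(* A minimal fractional cover exists: covers with a coordinate larger than the size of
   a feasible one are irrelevant, and the remaining ones form a compact set. *)
lemma optimal_frac_cover_exists:
  fixes E :: "'v set"
  assumes E: "finite E" and H: "finite H" and meets: "\<And>h. h \<in> H \<Longrightarrow> h \<inter> E \<noteq> {}"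
  shows "\<exists>g. optimal_frac_cover E w H g"
proof -
  define g0 where "g0 x = (if x \<in> E then real (\<Sum>h\<in>H. w h) else 0)" for x
  have g0: "frac_cover E w H g0"
    unfolding g0_def by (rule frac_cover_exists[OF assms])
  define W where "W = (\<Sum>e\<in>E. g0 e)"
  define K where "K = Pi UNIV (\<lambda>x. if x \<in> E then {0..W} else {0::real})"
  have "g0 e \<le> W" if "e \<in> E" for e
    unfolding W_def by (rule member_le_sum) (use that E g0 in \<open>auto simp: frac_cover_def\<close>)
  then have "g0 \<in> K"
    using g0 by (auto simp: K_def frac_cover_def)
  have compact: "compact (K \<inter> {y. frac_cover E w H y})"
    unfolding K_def by (rule bounded_frac_covers_compact)
  obtain g where g: "g \<in> K \<inter> {y. frac_cover E w H y}"
    and g_min: "\<forall>y\<in>K \<inter> {y. frac_cover E w H y}. (\<Sum>e\<in>E. g e) \<le> (\<Sum>e\<in>E. y e)"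
    using continuous_attains_inf[OF compact _ continuous_on_subset[OF continuous_on_coordinate_sum[of E]]]
      g0 \<open>g0 \<in> K\<close> by blast
  have "(\<Sum>e\<in>E. g e) \<le> (\<Sum>e\<in>E. y e)" if y: "frac_cover E w H y" for y
  proof (cases "y \<in> K")
    case True
    then show ?thesis
      using g_min y by blast
  next
    case False
    then obtain x where "y x \<notin> (if x \<in> E then {0..W} else {0})"
      by (auto simp: K_def)
    then have x: "x \<in> E" "W < y x"
      using y by (auto simp: frac_cover_def split: if_splits)
    have "(\<Sum>e\<in>E. g e) \<le> W"
      using g_min \<open>g0 \<in> K\<close> g0 by (auto simp: W_def)
    also have "\<dots> < y x"
      by (rule x)
    also have "\<dots> \<le> (\<Sum>e\<in>E. y e)"
      by (rule member_le_sum) (use x E y in \<open>auto simp: frac_cover_def\<close>)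
    finally show ?thesis
      by simp
  qed
  then show ?thesis
    using g by (auto simp: optimal_frac_cover_def)
qed

lemma uniform_slack:
  fixes s t :: "'a \<Rightarrow> real"
  assumes A: "finite A" and t: "\<And>a. a \<in> A \<Longrightarrow> 0 \<le> t a" and st: "\<And>a. a \<in> A \<Longrightarrow> t a < s a"
  obtains \<theta> where "0 < \<theta>" "\<theta> \<le> 1" "\<And>a. a \<in> A \<Longrightarrow> \<theta> * s a \<le> s a - t a"
proof
  let ?L = "insert 1 ((\<lambda>a. (s a - t a) / s a) ` A)"
  have fin: "finite ?L"
    using A by simp
  have "0 < (s a - t a) / s a" if "a \<in> A" for a
    using t[OF that] st[OF that] by simp
  then show "0 < Min ?L"
    using fin by simp
  show "Min ?L \<le> 1"
    using fin by simp
  fix a assume a: "a \<in> A"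
  then have "Min ?L \<le> (s a - t a) / s a"
    using fin by simp
  moreover have "0 < s a"
    using t[OF a] st[OF a] by linarith
  ultimately show "Min ?L * s a \<le> s a - t a"
    by (simp add: pos_le_divide_eq)
qed

lemma frac_cover_shift:
  assumes H: "finite H" and g_cover: "frac_cover E w H g"
    and g'_nonneg: "\<And>x. 0 \<le> g' x" and g'_support: "\<And>x. x \<notin> E \<Longrightarrow> g' x = 0"
    and tight: "\<And>h. h \<in> H \<Longrightarrow> (\<Sum>e\<in>h \<inter> E. g e) = real (w h) \<Longrightarrow> real (w h) \<le> (\<Sum>e\<in>h \<inter> E. g' e)"
  obtains \<theta> where "0 < \<theta>" "frac_cover E w H (\<lambda>x. (1 - \<theta>) * g x + \<theta> * g' x)"
proof -
  define s where "s h = (\<Sum>e\<in>h \<inter> E. g e)" for h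
  have s_ge: "real (w h) \<le> s h" if "h \<in> H" for h
    using g_cover that by (simp add: frac_cover_def s_def)
  obtain \<theta> where \<theta>: "0 < \<theta>" "\<theta> \<le> 1"
    and slack: "\<And>h. h \<in> {h\<in>H. real (w h) < s h} \<Longrightarrow> \<theta> * s h \<le> s h - real (w h)"
    by (rule uniform_slack[of "{h\<in>H. real (w h) < s h}" "\<lambda>h. real (w h)" s]) (use H in auto)
  have sum_shift: "(\<Sum>e\<in>A. (1 - \<theta>) * g e + \<theta> * g' e) = (1 - \<theta>) * (\<Sum>e\<in>A. g e) + \<theta> * (\<Sum>e\<in>A. g' e)" for A
    by (simp add: sum.distrib sum_distrib_left)
  have "frac_cover E w H (\<lambda>x. (1 - \<theta>) * g x + \<theta> * g' x)"
    unfolding frac_cover_def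
  proof (intro conjI allI impI ballI)
    fix x
    show "0 \<le> (1 - \<theta>) * g x + \<theta> * g' x"
      using g_cover g'_nonneg[of x] \<theta> by (simp add: frac_cover_def)
    show "x \<notin> E \<Longrightarrow> (1 - \<theta>) * g x + \<theta> * g' x = 0"
      using g_cover g'_support by (simp add: frac_cover_def)
  next
    fix h assume h: "h \<in> H"
    have g'_sum: "0 \<le> \<theta> * (\<Sum>e\<in>h \<inter> E. g' e)"
      using \<theta> g'_nonneg by (simp add: sum_nonneg)
    show "real (w h) \<le> (\<Sum>e\<in>h \<inter> E. (1 - \<theta>) * g e + \<theta> * g' e)"
    proof (cases "s h = real (w h)")
      case True
      then show ?thesis
        using tight[OF h] \<theta> unfolding sum_shift s_def[symmetric]
        by (simp add: algebra_simps mult_left_mono)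
    next
      case False
      then have "\<theta> * s h \<le> s h - real (w h)"
        using slack s_ge[OF h] h by simp
      then show ?thesis
        using g'_sum unfolding sum_shift s_def[symmetric] by (simp add: algebra_simps)
    qed
  qed
  then show ?thesis
    using that \<theta> by blast
qed

lemma optimal_frac_cover_tight:
  assumes H: "finite H" and g: "optimal_frac_cover E w H g"
    and g'_nonneg: "\<And>x. 0 \<le> g' x" and g'_support: "\<And>x. x \<notin> E \<Longrightarrow> g' x = 0"
    and tight: "\<And>h. h \<in> H \<Longrightarrow> (\<Sum>e\<in>h \<inter> E. g e) = real (w h) \<Longrightarrow> real (w h) \<le> (\<Sum>e\<in>h \<inter> E. g' e)"
  shows "(\<Sum>e\<in>E. g e) \<le> (\<Sum>e\<in>E. g' e)"
proof -
  have g_cover: "frac_cover E w H g"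
    using g by (simp add: optimal_frac_cover_def)
  obtain \<theta> where \<theta>: "0 < \<theta>" and shifted: "frac_cover E w H (\<lambda>x. (1 - \<theta>) * g x + \<theta> * g' x)"
    using frac_cover_shift[OF H g_cover g'_nonneg g'_support tight] by blast
  have "(\<Sum>e\<in>E. g e) \<le> (\<Sum>e\<in>E. (1 - \<theta>) * g e + \<theta> * g' e)"
    using g shifted unfolding optimal_frac_cover_def by blast
  also have "\<dots> = (1 - \<theta>) * (\<Sum>e\<in>E. g e) + \<theta> * (\<Sum>e\<in>E. g' e)"
    by (simp add: sum.distrib sum_distrib_left)
  finally have "\<theta> * (\<Sum>e\<in>E. g e) \<le> \<theta> * (\<Sum>e\<in>E. g' e)"
    by (simp add: algebra_simps)
  then show ?thesis
    using \<theta> by simp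
qed

locale interval_hypergraph =
  fixes d :: nat and H :: "real set set" and w :: "real set \<Rightarrow> nat"
  assumes finite_H: "finite H" and d_intervals: "\<forall>h\<in>H. d_interval d h"
begin

definition comp :: "real set \<Rightarrow> (real \<times> real) list" where
  "comp h = (SOME I. interval_decomp I h \<and> length I \<le> d)"

lemma comp:
  assumes "h \<in> H"
  shows "interval_decomp (comp h) h \<and> length (comp h) \<le> d"
proof -
  obtain I where "interval_decomp I h \<and> length I \<le> d"
    using assms d_intervals d_interval_iff_decomp by blast
  then show ?thesis
    unfolding comp_def by (rule someI)
qed

definition E :: "real set" where
  "E = (\<Union>h\<in>H. \<Union>p\<in>set (comp h). {fst p, snd p})"

lemma finite_E: "finite E"
  unfolding E_def using finite_H by auto

lemma comp_endpoints: "h \<in> H \<Longrightarrow> p \<in> set (comp h) \<Longrightarrow> fst p \<in> E \<and> snd p \<in> E"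
  unfolding E_def by auto

lemma comp_subset:
  assumes "h \<in> H" "p \<in> set (comp h)"
  shows "{fst p..snd p} \<subseteq> h"
  using interval_decomp_mem[OF comp[OF assms(1), THEN conjunct1]] assms(2) by auto

lemma edge_meets_E: "h \<in> H \<Longrightarrow> h \<inter> E \<noteq> {}"
proof -
  assume h: "h \<in> H"
  define p where "p = hd (comp h)"
  have p: "p \<in> set (comp h)"
    using comp[OF h] by (simp add: p_def interval_decomp_def)
  then have "fst p \<in> h"
    using comp_subset[OF h p] comp[OF h] by (auto simp: interval_decomp_def)
  then show ?thesis
    using comp_endpoints[OF h p] by auto
qed

(* Intersecting edges meet in a point of E: the larger of the left endpoints of two
   overlapping components. *)
lemma intersecting_edges_meet_E:
  assumes h: "h \<in> H" and h': "h' \<in> H" and meet: "h \<inter> h' \<noteq> {}"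
  shows "h \<inter> h' \<inter> E \<noteq> {}"
proof -
  obtain x where x: "x \<in> h" "x \<in> h'"
    using meet by auto
  obtain p where p: "p \<in> set (comp h)" "x \<in> {fst p..snd p}"
    using interval_decomp_mem[OF comp[OF h, THEN conjunct1]] x(1) by auto
  obtain q where q: "q \<in> set (comp h')" "x \<in> {fst q..snd q}"
    using interval_decomp_mem[OF comp[OF h', THEN conjunct1]] x(2) by auto
  let ?m = "max (fst p) (fst q)"
  have "?m \<in> {fst p..snd p}" "?m \<in> {fst q..snd q}"
    using p q by auto
  then have "?m \<in> h \<inter> h'"
    using comp_subset[OF h p(1)] comp_subset[OF h' q(1)] by auto
  moreover have "?m \<in> E"
    using comp_endpoints[OF h p(1)] comp_endpoints[OF h' q(1)] by (simp add: max_def)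
  ultimately show ?thesis
    by auto
qed

lemma tau_w_le_frac_cover:
  assumes g: "frac_cover E w H g"
  shows "real (tau_w w H) \<le> real d * (\<Sum>e\<in>E. g e)"
proof -
  have g_nonneg: "0 \<le> real d * g x" for x
    using g by (simp add: frac_cover_def)
  obtain c where c_support: "{x. c x \<noteq> 0} \<subseteq> E"
    and c_total: "real (\<Sum>x\<in>E. c x) \<le> (\<Sum>x\<in>E. real d * g x)"
    and c_intervals: "\<And>a b k. b \<in> E \<Longrightarrow> real k \<le> (\<Sum>x\<in>E \<inter> {a..b}. real d * g x) \<Longrightarrow>
        k \<le> (\<Sum>x\<in>E \<inter> {a..b}. c x)"
    using line_rounding[where G="\<lambda>x. real d * g x", OF finite_E g_nonneg] by blast
  have support_sum: "(\<Sum>x\<in>S \<inter> {x. c x \<noteq> 0}. c x) = (\<Sum>x\<in>S \<inter> E. c x)" for S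
    by (rule sum.mono_neutral_left) (use finite_E c_support in auto)
  have "is_w_cover w H c"
    unfolding is_w_cover_def
  proof (intro conjI ballI)
    show "finite {v. c v \<noteq> 0}"
      using c_support finite_E finite_subset by blast
    fix h assume h: "h \<in> H"
    have "real (w h) \<le> (\<Sum>e\<in>h \<inter> E. g e)"
      using g h by (simp add: frac_cover_def)
    then have "\<exists>p\<in>set (comp h). real (w h) \<le> real d * (\<Sum>e\<in>E \<inter> {fst p..snd p}. g e)"
      using comp[OF h] by (intro pigeonhole_component[OF finite_E]) auto
    then obtain p where p: "p \<in> set (comp h)"
      and heavy: "real (w h) \<le> real d * (\<Sum>e\<in>E \<inter> {fst p..snd p}. g e)"
      by blast
    have "w h \<le> (\<Sum>x\<in>E \<inter> {fst p..snd p}. c x)"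
      using heavy by (intro c_intervals) (simp_all add: comp_endpoints[OF h p] sum_distrib_left)
    also have "\<dots> \<le> (\<Sum>x\<in>h \<inter> E. c x)"
      using comp_subset[OF h p] finite_E by (intro sum_mono2) blast+
    finally show "w h \<le> (\<Sum>v\<in>h \<inter> {v. c v \<noteq> 0}. c v)"
      unfolding support_sum .
  qed
  then have "tau_w w H \<le> (\<Sum>x\<in>{x. c x \<noteq> 0}. c x)"
    by (rule tau_w_le_cover)
  also have "\<dots> = (\<Sum>x\<in>E. c x)"
    using support_sum[of UNIV] by simp
  finally have "real (tau_w w H) \<le> real (\<Sum>x\<in>E. c x)"
    by (simp only: of_nat_le_iff)
  also have "\<dots> \<le> (\<Sum>x\<in>E. real d * g x)"
    by (rule c_total)
  finally show ?thesis
    by (simp add: sum_distrib_left)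
qed

end

(* Step (2): the blow-up of an optimal fractional cover g at scale N.  Each point e of E
   is repeated mult e times in M, and the integer k in [n] represents enum M k. *)
locale blow_up = interval_hypergraph +
  fixes g :: "real \<Rightarrow> real" and N :: nat
  assumes optimal: "optimal_frac_cover E w H g" and N_pos: "1 \<le> N" and H_nonempty: "H \<noteq> {}"
begin

(* mult e \<ge> 1 ensures every point of E is represented, so components stay nonempty. *)
definition mult :: "real \<Rightarrow> nat" where
  "mult e = nat \<lceil>real N * g e\<rceil> + 1"

definition M :: "real multiset" where
  "M = (\<Sum>e\<in>E. replicate_mset (mult e) e)"

abbreviation n :: nat where
  "n \<equiv> size M"

definition tset :: "real set \<Rightarrow> nat set" where
  "tset h = {k\<in>{1..n}. enum M k \<in> h}"

definition tight :: "real set set" where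
  "tight = {h\<in>H. (\<Sum>e\<in>h \<inter> E. g e) = real (w h)}"

definition T :: "nat set set" where
  "T = tset ` tight"

lemma g_nonneg: "0 \<le> g x"
  using optimal by (simp add: optimal_frac_cover_def frac_cover_def)

lemma mult_lower: "real N * g e \<le> real (mult e)"
  unfolding mult_def by linarith

lemma mult_upper: "real (mult e) \<le> real N * g e + 2"
  using g_nonneg[of e] unfolding mult_def by (simp add: of_nat_nat) linarith

lemma count_M: "count M x = (if x \<in> E then mult x else 0)"
  unfolding M_def by (simp add: count_sum finite_E)

lemma fiber_card: "x \<in> E \<Longrightarrow> card {k\<in>{1..n}. enum M k = x} = mult x"
  using enum_fiber_card[of M x] count_M by simp

lemma enum_E: "k \<in> {1..n} \<Longrightarrow> enum M k \<in> E"
  using enum_in[of k M] count_M by (metis count_eq_zero_iff)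

lemma enum_onto:
  assumes "x \<in> E"
  shows "x \<in> enum M ` {1..n}"
proof -
  have "{k\<in>{1..n}. enum M k = x} \<noteq> {}"
    using fiber_card[OF assms] by (metis card.empty mult_def add_is_0 one_neq_zero)
  then show ?thesis
    by auto
qed

lemma n_pos: "1 \<le> n"
proof -
  obtain h where "h \<in> H"
    using H_nonempty by auto
  then obtain x where "x \<in> E"
    using edge_meets_E by auto
  then show ?thesis
    using enum_onto by fastforce
qed

lemma tset_E: "tset h = {k\<in>{1..n}. enum M k \<in> h \<inter> E}"
  using enum_E by (auto simp: tset_def)

lemma sum_tset: "(\<Sum>k\<in>tset h. f k) = (\<Sum>x\<in>h \<inter> E. \<Sum>k\<in>{k\<in>{1..n}. enum M k = x}. f k)"
  unfolding tset_E by (rule sum_over_fibers) (use finite_E in auto)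

lemma card_tset: "card (tset h) = (\<Sum>x\<in>h \<inter> E. mult x)"
  using sum_tset[where h=h and f="\<lambda>_. 1::nat"] fiber_card by simp

lemma tset_discrete:
  assumes h: "h \<in> H"
  shows "discrete_d_interval n d (tset h)"
proof -
  have "\<exists>I'. interval_decomp I' (tset h) \<and> length I' = length (comp h)"
    unfolding tset_def
  proof (rule monotone_preimage_decomp)
    show "interval_decomp (comp h) h"
      using comp[OF h] by simp
    show "fst p \<in> enum M ` {1..n}" if "p \<in> set (comp h)" for p
      using enum_onto comp_endpoints[OF h that] by blast
  qed (rule enum_mono)
  then show ?thesis
    using comp[OF h] d_interval_iff_decomp
    by (fastforce simp: discrete_d_interval_def tset_def)
qed

definition pullback :: "(nat \<Rightarrow> real) \<Rightarrow> real \<Rightarrow> real" where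
  "pullback f x = (if x \<in> E then (\<Sum>k\<in>{k\<in>{1..n}. enum M k = x}. f k) / real N else 0)"

lemma sum_pullback:
  assumes "A \<subseteq> E"
  shows "(\<Sum>x\<in>A. pullback f x) = (\<Sum>k\<in>{k\<in>{1..n}. enum M k \<in> A}. f k) / real N"
proof -
  have "(\<Sum>x\<in>A. pullback f x) = (\<Sum>x\<in>A. (\<Sum>k\<in>{k\<in>{1..n}. enum M k = x}. f k) / real N)"
    by (rule sum.cong) (use assms in \<open>auto simp: pullback_def\<close>)
  also have "\<dots> = (\<Sum>x\<in>A. \<Sum>k\<in>{k\<in>{1..n}. enum M k = x}. f k) / real N"
    by (simp add: sum_divide_distrib)
  also have "\<dots> = (\<Sum>k\<in>{k\<in>{1..n}. enum M k \<in> A}. f k) / real N"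
    using assms finite_E finite_subset by (subst sum_over_fibers) auto
  finally show ?thesis .
qed

lemma pullback_tight:
  assumes f_cover: "\<forall>t\<in>T. real (card t) \<le> (\<Sum>v\<in>t \<inter> {1..n}. f v)"
    and h: "h \<in> H" and tight_h: "(\<Sum>e\<in>h \<inter> E. g e) = real (w h)"
  shows "real (w h) \<le> (\<Sum>e\<in>h \<inter> E. pullback f e)"
proof -
  have "tset h \<in> T"
    using h tight_h by (auto simp: T_def tight_def)
  moreover have "tset h \<inter> {1..n} = tset h"
    by (auto simp: tset_def)
  ultimately have covered: "real (card (tset h)) \<le> (\<Sum>k\<in>tset h. f k)"
    using f_cover by metis
  have "real N * real (w h) = (\<Sum>e\<in>h \<inter> E. real N * g e)"
    by (simp add: tight_h[symmetric] sum_distrib_left)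
  also have "\<dots> \<le> real (card (tset h))"
    unfolding card_tset of_nat_sum by (intro sum_mono mult_lower)
  also have "\<dots> \<le> (\<Sum>k\<in>tset h. f k)"
    by (rule covered)
  also have "\<dots> = real N * (\<Sum>e\<in>h \<inter> E. pullback f e)"
    using sum_pullback[of "h \<inter> E" f] N_pos by (simp add: tset_E)
  finally show ?thesis
    using N_pos by simp
qed

lemma frac_tau_T_ge: "real N * (\<Sum>e\<in>E. g e) \<le> frac_tau_w n card T"
proof (rule frac_tau_card_ge)
  show "\<forall>t\<in>T. t \<subseteq> {1..n}"
    by (auto simp: T_def tset_def)
  fix f :: "nat \<Rightarrow> real"
  assume f_nonneg: "\<forall>v. 0 \<le> f v" and f_cover: "\<forall>t\<in>T. real (card t) \<le> (\<Sum>v\<in>t \<inter> {1..n}. f v)"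
  have N: "0 < real N"
    using N_pos by simp
  have "(\<Sum>e\<in>E. g e) \<le> (\<Sum>e\<in>E. pullback f e)"
  proof (rule optimal_frac_cover_tight[OF finite_H optimal])
    show "0 \<le> pullback f x" for x
      using f_nonneg N by (simp add: pullback_def sum_nonneg)
    show "x \<notin> E \<Longrightarrow> pullback f x = 0" for x
      by (simp add: pullback_def)
  qed (rule pullback_tight[OF f_cover])
  also have "\<dots> = (\<Sum>k\<in>{1..n}. f k) / real N"
  proof -
    have "{k\<in>{1..n}. enum M k \<in> E} = {1..n}"
      using enum_E by auto
    then show ?thesis
      using sum_pullback[of E f] by simp
  qed
  finally show "real N * (\<Sum>e\<in>E. g e) \<le> (\<Sum>k\<in>{1..n}. f k)"
    using N by (simp add: pos_le_divide_eq mult.commute)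
qed

lemma disjoint_tset:
  assumes "h \<in> H" "h' \<in> H" "tset h \<inter> tset h' = {}"
  shows "h \<inter> h' = {}"
proof (rule ccontr)
  assume "h \<inter> h' \<noteq> {}"
  then obtain x where x: "x \<in> h" "x \<in> h'" "x \<in> E"
    using intersecting_edges_meet_E assms(1,2) by blast
  then obtain k where "k \<in> {1..n}" "enum M k = x"
    using enum_onto by blast
  then have "k \<in> tset h \<inter> tset h'"
    using x by (simp add: tset_def)
  then show False
    using assms(3) by blast
qed

lemma card_tset_tight:
  assumes "h \<in> tight"
  shows "real (card (tset h)) \<le> real N * real (w h) + 2 * real (card E)"
proof -
  have "real (card (tset h)) = (\<Sum>x\<in>h \<inter> E. real (mult x))"
    by (simp add: card_tset)
  also have "\<dots> \<le> (\<Sum>x\<in>h \<inter> E. real N * g x + 2)"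
    by (intro sum_mono mult_upper)
  also have "\<dots> = real N * real (w h) + 2 * real (card (h \<inter> E))"
    using assms by (simp add: tight_def sum.distrib sum_distrib_left[symmetric])
  also have "\<dots> \<le> real N * real (w h) + 2 * real (card E)"
    using card_mono[OF finite_E, of "h \<inter> E"] by simp
  finally show ?thesis .
qed

lemma matching_lift:
  assumes P: "P \<subseteq> T" "matching P"
  obtains Q where "Q \<subseteq> tight" "matching Q" "(\<Sum>t\<in>P. card t) = (\<Sum>h\<in>Q. card (tset h))"
proof
  define lift where "lift = inv_into tight tset"
  have lift: "lift t \<in> tight" "tset (lift t) = t" if "t \<in> P" for t
    using P(1) that by (auto simp: lift_def T_def inv_into_into f_inv_into_f)
  show "lift ` P \<subseteq> tight"
    using lift by auto
  show "matching (lift ` P)"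
    unfolding matching_def
  proof (intro ballI impI)
    fix a b assume "a \<in> lift ` P" "b \<in> lift ` P" "a \<noteq> b"
    then obtain s t where st: "s \<in> P" "t \<in> P" "a = lift s" "b = lift t" "s \<noteq> t"
      by blast
    then have "tset a \<inter> tset b = {}"
      using P(2) lift by (auto simp: matching_def)
    then show "a \<inter> b = {}"
      using disjoint_tset lift st by (auto simp: tight_def)
  qed
  have "inj_on lift P"
    unfolding lift_def by (rule inj_on_inv_into) (use P(1) in \<open>simp add: T_def\<close>)
  then show "(\<Sum>t\<in>P. card t) = (\<Sum>h\<in>lift ` P. card (tset h))"
    using lift by (simp add: sum.reindex)
qed

(* nu(T) \<le> N * nu_w(H) + 2|E||H|; the additive term comes from rounding N * g up. *)
lemma nu_T_le: "real (nu_w card T) \<le> real N * real (nu_w w H) + 2 * real (card E) * real (card H)"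
proof -
  have "finite T"
    unfolding T_def tight_def using finite_H by simp
  then obtain P where P: "P \<subseteq> T" "matching P" and nu: "nu_w card T = (\<Sum>t\<in>P. card t)"
    using nu_w_attained by metis
  obtain Q where Q: "Q \<subseteq> tight" "matching Q" and lifted: "(\<Sum>t\<in>P. card t) = (\<Sum>h\<in>Q. card (tset h))"
    using matching_lift[OF P] by blast
  have Q_H: "Q \<subseteq> H"
    using Q(1) by (auto simp: tight_def)
  have "real (nu_w card T) = (\<Sum>h\<in>Q. real (card (tset h)))"
    using nu lifted by simp
  also have "\<dots> \<le> (\<Sum>h\<in>Q. real N * real (w h) + 2 * real (card E))"
    using Q(1) by (intro sum_mono card_tset_tight) auto
  also have "\<dots> = real N * real (\<Sum>h\<in>Q. w h) + 2 * real (card E) * real (card Q)"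
    by (simp add: sum.distrib sum_distrib_left)
  also have "\<dots> \<le> real N * real (nu_w w H) + 2 * real (card E) * real (card H)"
    using nu_w_ge_matching[OF finite_H Q_H Q(2)] card_mono[OF finite_H Q_H]
    by (intro add_mono mult_left_mono) (simp_all del: of_nat_sum)
  finally show ?thesis .
qed

end

lemma le_of_scaled_le:
  fixes X Y Z :: real
  assumes "\<And>N::nat. 1 \<le> N \<Longrightarrow> real N * X \<le> real N * Y + Z"
  shows "X \<le> Y"
proof (rule ccontr)
  assume "\<not> X \<le> Y"
  then obtain m :: nat where "Z < real m * (X - Y)"
    using ex_less_of_nat_mult[of "X - Y" Z] by auto
  then have "Z < real (Suc m) * (X - Y)"
    using \<open>\<not> X \<le> Y\<close> by (simp add: distrib_right)
  then show False
    using assms[of "Suc m"] by (simp add: algebra_simps)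
qed

context interval_hypergraph
begin

lemma optimal_frac_cover_le_nu:
  assumes hyp: "\<forall>n\<ge>1. \<forall>T :: nat set set. finite T \<and> (\<forall>t\<in>T. discrete_d_interval n d t) \<longrightarrow>
      frac_tau_w n card T \<le> \<alpha> * real d * real (nu_w card T)"
    and \<alpha>: "0 \<le> \<alpha>" and g: "optimal_frac_cover E w H g"
  shows "(\<Sum>e\<in>E. g e) \<le> \<alpha> * real d * real (nu_w w H)"
proof (cases "H = {}")
  case True
  then have "E = {}"
    unfolding E_def by simp
  then show ?thesis
    using \<alpha> by simp
next
  case False
  define C where "C = 2 * real (card E) * real (card H)"
  show ?thesis
  proof (rule le_of_scaled_le)
    fix N :: nat assume N: "1 \<le> N"
    interpret blow_up d H w g N
      by unfold_locales (use N False g in auto)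
    have "finite T" "\<forall>t\<in>T. discrete_d_interval n d t"
      using finite_H tset_discrete by (auto simp: T_def tight_def)
    then have "real N * (\<Sum>e\<in>E. g e) \<le> \<alpha> * real d * real (nu_w card T)"
      using hyp n_pos frac_tau_T_ge by fastforce
    also have "\<dots> \<le> \<alpha> * real d * (real N * real (nu_w w H) + C)"
      using nu_T_le \<alpha> by (simp add: C_def mult_left_mono)
    finally show "real N * (\<Sum>e\<in>E. g e) \<le> real N * (\<alpha> * real d * real (nu_w w H)) + \<alpha> * real d * C"
      by (simp add: algebra_simps)
  qed
qed

end

theorem theorem5p3:
  fixes d :: nat and \<alpha> :: real
  assumes "d \<ge> 1" and "\<alpha> > 0"
    and "\<forall>n\<ge>1. \<forall>T :: nat set set. finite T \<and> (\<forall>t\<in>T. discrete_d_interval n d t) \<longrightarrow>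
           frac_tau_w n card T \<le> \<alpha> * real d * real (nu_w card T)"
  shows "\<forall>(H :: real set set) (w :: real set \<Rightarrow> nat).
           finite H \<and> (\<forall>h\<in>H. d_interval d h) \<longrightarrow>
           real (tau_w w H) \<le> \<alpha> * real d ^ 2 * real (nu_w w H)"
proof (intro allI impI)
  fix H :: "real set set" and w :: "real set \<Rightarrow> nat"
  assume "finite H \<and> (\<forall>h\<in>H. d_interval d h)"
  then interpret interval_hypergraph d H w
    by unfold_locales auto
  obtain g where g: "optimal_frac_cover E w H g"
    using optimal_frac_cover_exists[OF finite_E finite_H edge_meets_E] by blast
  have "real (tau_w w H) \<le> real d * (\<Sum>e\<in>E. g e)"
    using g by (intro tau_w_le_frac_cover) (simp add: optimal_frac_cover_def)
  also have "\<dots> \<le> real d * (\<alpha> * real d * real (nu_w w H))"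
    using optimal_frac_cover_le_nu[OF assms(3) _ g] assms(2) by (intro mult_left_mono) auto
  also have "\<dots> = \<alpha> * real d ^ 2 * real (nu_w w H)"
    by (simp add: power2_eq_square)
  finally show "real (tau_w w H) \<le> \<alpha> * real d ^ 2 * real (nu_w w H)" .
qed

end
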